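(* There is an absolute constant $c>0$ such that, as $n\to\infty$, the fraction of all $2^{n2^n}$ operators $f:\{0,1\}^n\to\{0,1\}^n$ that satisfy $\mathrm{s}(f)\ge c\,n^2$ tends to $1$. In short: for almost all $n$-operators $f$, $\mathrm{s}(f)=\Omega(n^2)$.
   Context: An $n$-operator is a map $f=(f_1,\dots,f_n):\{0,1\}^n\to\{0,1\}^n$. A (general) circuit is a directed acyclic graph with $n$ input nodes $x_1,\dots,x_n$ (of fanin $0$) and $n$ designated output nodes $y_1,\dots,y_n$. Each non-input node may compute an arbitrary boolean function of the values at its in-neighbours, and there is no restriction on fanin or fanout. The circuit computes $f$ if, for every $i$, the function computed at $y_i$ is $f_i$. The size of a circuit is its total number of wires (edges). $\mathrm{s}(f)$ denotes the minimum size of a circuit computing $f$, with no restriction on depth. *)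

theory Defs
  imports Complex_Main
begin

text \<open>A general circuit with n inputs is given by: a number N of nodes (nodes 0..n-1 are
the inputs x_1..x_n, nodes n..N-1 are gates, numbered in a topological order, which is no
loss of generality for a DAG); for each gate v the list P v of its distinct in-neighbours
(all smaller than v); an arbitrary boolean function G v applied to the values of the
in-neighbours (in the order of P v); and an output map out, out i being the node y_(i+1).\<close>

fun node_vals :: "nat \<Rightarrow> (nat \<Rightarrow> nat list) \<Rightarrow> (nat \<Rightarrow> bool list \<Rightarrow> bool)
    \<Rightarrow> bool list \<Rightarrow> nat \<Rightarrow> bool list" where
  "node_vals n P G x 0 = []"
| "node_vals n P G x (Suc k) =
     (let vs = node_vals n P G x k
      in vs @ [if k < n then x ! k else G k (map (\<lambda>u. vs ! u) (P k))])"

definition valid_circuit :: "nat \<Rightarrow> nat \<Rightarrow> (nat \<Rightarrow> nat list) \<Rightarrow> (nat \<Rightarrow> nat) \<Rightarrow> bool" where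
  "valid_circuit n N P out \<longleftrightarrow>
     n \<le> N \<and>
     (\<forall>v. n \<le> v \<and> v < N \<longrightarrow> distinct (P v) \<and> (\<forall>u\<in>set (P v). u < v)) \<and>
     (\<forall>i<n. out i < N)"

definition circuit_size :: "nat \<Rightarrow> nat \<Rightarrow> (nat \<Rightarrow> nat list) \<Rightarrow> nat" where
  "circuit_size n N P = (\<Sum>v\<in>{n..<N}. length (P v))"

text \<open>n-operators f : {0,1}^n -> {0,1}^n, represented extensionally as functions on
bool lists (arguments of length n map to results of length n, everything else to []).\<close>
definition operators :: "nat \<Rightarrow> (bool list \<Rightarrow> bool list) set" where
  "operators n = {F. (\<forall>x. length x = n \<longrightarrow> length (F x) = n) \<and>
                     (\<forall>x. length x \<noteq> n \<longrightarrow> F x = [])}"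

definition computes :: "nat \<Rightarrow> nat \<Rightarrow> (nat \<Rightarrow> nat list) \<Rightarrow> (nat \<Rightarrow> bool list \<Rightarrow> bool)
    \<Rightarrow> (nat \<Rightarrow> nat) \<Rightarrow> (bool list \<Rightarrow> bool list) \<Rightarrow> bool" where
  "computes n N P G out F \<longleftrightarrow> valid_circuit n N P out \<and>
     (\<forall>x. length x = n \<longrightarrow> (\<forall>i<n. node_vals n P G x N ! (out i) = F x ! i))"

definition circ_complexity :: "nat \<Rightarrow> (bool list \<Rightarrow> bool list) \<Rightarrow> nat" where
  "circ_complexity n F =
     (LEAST m. \<exists>N P G out. computes n N P G out F \<and> circuit_size n N P = m)"

end

theory Submission
  imports Defs "HOL-Library.FuncSet" "HOL-Real_Asymp.Real_Asymp"
begin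

(* A circuit is replaced by the boolean functions computed at its nodes. Walking through the
   gates in topological order, the set of computed functions grows from the base functions
   (projections and constants) by adding, for each gate of fanin k >= 1, some function
   h(f_1,...,f_k) of k functions already present, at cost k wires; this is the inductive
   predicate buildable. An operator of complexity s is then an n-tuple of functions from a set
   buildable at cost s.

   Counting: a gate of fanin k sees at most min(2^k, 2^n) <= k(2^n/n + 1) input patterns, so
   it can realise at most Q^k functions, Q = 2^(2^n/n + 1); buildable sets have at most
   M = n + 2 + s elements. Hence there are at most (2MQ)^s buildable sets of cost s and at most
   (s+1)(2MQ)^s M^n operators of complexity <= s. For s = n^2/2 this is
   2^(n 2^n / 2 + O(n^2 log n)), a vanishing fraction of all 2^(n 2^n) operators. *)

subsection \<open>Evaluating a circuit\<close>

lemma node_vals_length [simp]: "length (node_vals n P G x k) = k"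
  by (induction k) (auto simp: Let_def)

lemma node_vals_prefix:
  "v < k \<Longrightarrow> node_vals n P G x k ! v = node_vals n P G x (Suc v) ! v"
proof (induction k)
  case 0 then show ?case by simp
next
  case (Suc k)
  show ?case
  proof (cases "v < k")
    case True
    then show ?thesis using Suc by (simp add: Let_def nth_append)
  next
    case False
    then have "v = k" using Suc.prems by simp
    then show ?thesis by simp
  qed
qed

lemma node_vals_last:
  "node_vals n P G x (Suc v) ! v =
     (if v < n then x ! v else G v (map (\<lambda>u. node_vals n P G x v ! u) (P v)))"
  by (simp add: Let_def nth_append)

lemma node_vals_input: "u < n \<Longrightarrow> u < k \<Longrightarrow> node_vals n P G x k ! u = x ! u"
  using node_vals_prefix[of u k] node_vals_last[of n P G x u] by simp

lemma node_vals_gate: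
  assumes "n \<le> v" "v < N" and preds: "\<forall>u\<in>set (P v). u < v"
  shows "node_vals n P G x N ! v = G v (map (\<lambda>u. node_vals n P G x N ! u) (P v))"
proof -
  have "node_vals n P G x N ! v = G v (map (\<lambda>u. node_vals n P G x v ! u) (P v))"
    using node_vals_prefix[of v N] node_vals_last[of n P G x v] assms(1,2) by simp
  also have "map (\<lambda>u. node_vals n P G x v ! u) (P v) = map (\<lambda>u. node_vals n P G x N ! u) (P v)"
    using preds assms(2) node_vals_prefix[of _ v] node_vals_prefix[of _ N]
    by (intro map_cong) auto
  finally show ?thesis .
qed

text \<open>Every operator is computed by some circuit: n gates, the i-th reading all inputs and
  computing the i-th output bit.\<close>
lemma operator_has_circuit:
  assumes F: "F \<in> operators n"
  shows "\<exists>N P G out. computes n N P G out F"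
proof -
  define P :: "nat \<Rightarrow> nat list" where "P = (\<lambda>v. [0..<n])"
  define G where "G = (\<lambda>v ys. F ys ! (v - n))"
  define out where "out = (\<lambda>i::nat. n + i)"
  have "valid_circuit n (n + n) P out" unfolding valid_circuit_def P_def out_def by auto
  moreover have "node_vals n P G x (n + n) ! out i = F x ! i" if x: "length x = n" and i: "i < n"
    for x i
  proof -
    have "node_vals n P G x (n + n) ! out i = G (n + i) (map (\<lambda>u. node_vals n P G x (n + i) ! u) [0..<n])"
      using node_vals_prefix[of "n + i" "n + n"] node_vals_last[of n P G x "n + i"] i
      by (simp add: out_def P_def del: node_vals.simps)
    also have "map (\<lambda>u. node_vals n P G x (n + i) ! u) [0..<n] = x"
      using x by (intro nth_equalityI) (auto simp: node_vals_input)
    finally show ?thesis by (simp add: G_def)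
  qed
  ultimately show ?thesis unfolding computes_def by blast
qed

lemma optimal_circuit:
  assumes "F \<in> operators n"
  obtains N P G out where "computes n N P G out F" "circuit_size n N P = circ_complexity n F"
proof -
  have "\<exists>m N P G out. computes n N P G out F \<and> circuit_size n N P = m"
    using operator_has_circuit[OF assms] by blast
  from LeastI_ex[OF this] show ?thesis
    using that unfolding circ_complexity_def by blast
qed

subsection \<open>From circuits to families of boolean functions\<close>

text \<open>A boolean function of n variables, seen as a function on all bool lists that is
  False off the cube; this makes functions on the cube equal iff they agree on it.\<close>
definition cube_fun :: "nat \<Rightarrow> (bool list \<Rightarrow> bool) \<Rightarrow> bool list \<Rightarrow> bool" where
  "cube_fun n g = (\<lambda>x. if length x = n then g x else False)"

definition base_funs :: "nat \<Rightarrow> (bool list \<Rightarrow> bool) set" where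
  "base_funs n = (\<lambda>i. cube_fun n (\<lambda>x. x ! i)) ` {..<n} \<union> {cube_fun n (\<lambda>_. True), cube_fun n (\<lambda>_. False)}"

inductive buildable :: "nat \<Rightarrow> (bool list \<Rightarrow> bool) set \<Rightarrow> nat \<Rightarrow> bool" for n where
  base: "buildable n (base_funs n) 0"
| gate: "buildable n A c \<Longrightarrow> set Ls \<subseteq> A \<Longrightarrow> Ls \<noteq> [] \<Longrightarrow>
      buildable n (insert (cube_fun n (\<lambda>x. h (map (\<lambda>f. f x) Ls))) A) (c + length Ls)"

definition tuple_op :: "nat \<Rightarrow> (bool list \<Rightarrow> bool) list \<Rightarrow> bool list \<Rightarrow> bool list" where
  "tuple_op n fs = (\<lambda>x. if length x = n then map (\<lambda>f. f x) fs else [])"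

definition node_fun :: "nat \<Rightarrow> nat \<Rightarrow> (nat \<Rightarrow> nat list) \<Rightarrow> (nat \<Rightarrow> bool list \<Rightarrow> bool)
    \<Rightarrow> nat \<Rightarrow> bool list \<Rightarrow> bool" where
  "node_fun n N P G v = cube_fun n (\<lambda>x. node_vals n P G x N ! v)"

text \<open>Gates of fanin 0 compute constants, which are base functions and cost nothing.\<close>
lemma node_funs_buildable:
  assumes V: "valid_circuit n N P out" and d: "n + d \<le> N"
  shows "buildable n (base_funs n \<union> node_fun n N P G ` {..<n + d}) (\<Sum>v\<in>{n..<n + d}. length (P v))"
  using d
proof (induction d)
  case 0
  have "node_fun n N P G v = cube_fun n (\<lambda>x. x ! v)" if "v < n" for v
    using that 0 node_vals_input[of v n N] by (auto simp: node_fun_def cube_fun_def)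
  then have "base_funs n \<union> node_fun n N P G ` {..<n} = base_funs n"
    unfolding base_funs_def by auto
  then show ?case by (simp add: buildable.base)
next
  case (Suc d)
  define k where "k = n + d"
  have k: "n \<le> k" "k < N" using Suc.prems by (auto simp: k_def)
  have preds: "\<forall>u\<in>set (P k). u < k" using V k unfolding valid_circuit_def by auto
  define A where "A = base_funs n \<union> node_fun n N P G ` {..<k}"
  have IH: "buildable n A (\<Sum>v\<in>{n..<k}. length (P v))"
    using Suc by (simp add: A_def k_def)
  have new: "base_funs n \<union> node_fun n N P G ` {..<n + Suc d} = insert (node_fun n N P G k) A"
    by (auto simp: A_def k_def lessThan_Suc)
  have cost: "(\<Sum>v\<in>{n..<n + Suc d}. length (P v)) = (\<Sum>v\<in>{n..<k}. length (P v)) + length (P k)"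
    by (simp add: k_def)
  have gate_fun: "node_fun n N P G k = cube_fun n (\<lambda>x. G k (map (\<lambda>f. f x) (map (node_fun n N P G) (P k))))"
    using node_vals_gate[of n k N P, OF k preds] by (auto simp: node_fun_def cube_fun_def o_def)
  show ?case
  proof (cases "P k = []")
    case True
    then have "node_fun n N P G k \<in> base_funs n"
      using gate_fun unfolding base_funs_def by (cases "G k []") auto
    then show ?thesis using IH new cost True by (simp add: A_def insert_absorb)
  next
    case False
    have "set (map (node_fun n N P G) (P k)) \<subseteq> A" using preds by (auto simp: A_def)
    from buildable.gate[OF IH this, of "G k"] False show ?thesis
      using new cost gate_fun by simp
  qed
qed

lemma circuit_buildable:
  assumes C: "computes n N P G out F" and F: "F \<in> operators n"
  shows "\<exists>A fs. buildable n A (circuit_size n N P) \<and> set fs \<subseteq> A \<and> length fs = n \<and> F = tuple_op n fs"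
proof -
  have V: "valid_circuit n N P out"
    and out: "\<And>x i. length x = n \<Longrightarrow> i < n \<Longrightarrow> node_vals n P G x N ! (out i) = F x ! i"
    using C unfolding computes_def by auto
  have nN: "n \<le> N" and outN: "\<And>i. i < n \<Longrightarrow> out i < N"
    using V unfolding valid_circuit_def by auto
  define A where "A = base_funs n \<union> node_fun n N P G ` {..<N}"
  have "buildable n A (circuit_size n N P)"
    using node_funs_buildable[OF V, of "N - n"] nN by (simp add: A_def circuit_size_def)
  moreover define fs where "fs = map (\<lambda>i. node_fun n N P G (out i)) [0..<n]"
  moreover have "length fs = n" by (simp add: fs_def)
  moreover have "set fs \<subseteq> A" using outN by (auto simp: fs_def A_def)
  moreover have "F = tuple_op n fs"
  proof
    fix x
    show "F x = tuple_op n fs x"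
    proof (cases "length x = n")
      case True
      then have "length (F x) = n" using F by (simp add: operators_def)
      then show ?thesis using True out
        by (intro nth_equalityI) (auto simp: tuple_op_def fs_def node_fun_def cube_fun_def)
    next
      case False
      then show ?thesis using F by (simp add: operators_def tuple_op_def)
    qed
  qed
  ultimately show ?thesis by blast
qed

subsection \<open>Counting\<close>

lemma lists_card_le:
  assumes "finite A" "card A \<le> M"
  shows "finite {Ls. set Ls \<subseteq> A \<and> length Ls = k} \<and> card {Ls. set Ls \<subseteq> A \<and> length Ls = k} \<le> M ^ k"
  using assms finite_lists_length_eq[of A k] card_lists_length_eq[of A k] by (auto intro: power_mono)

lemma card_bool_cube: "finite {x::bool list. length x = n} \<and> card {x::bool list. length x = n} = 2 ^ n"
  using finite_lists_length_eq[of "UNIV::bool set" n] card_lists_length_eq[of "UNIV::bool set" n] by simp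

lemma mult_pow2_le: assumes "1 \<le> k" "k \<le> n" shows "n * 2 ^ k \<le> k * (2::nat) ^ n"
  using assms(2)
proof (induction n rule: dec_induct)
  case base then show ?case by simp
next
  case (step m)
  have "Suc m * 2 ^ k \<le> 2 * (m * 2 ^ k)" using step assms by simp
  also have "\<dots> \<le> 2 * (k * 2 ^ m)" using step by simp
  finally show ?case by simp
qed

text \<open>A gate of fanin k sees at most \<open>min (2^k) (2^n)\<close> distinct input patterns; this is at
  most k times \<open>2^n/n + 1\<close>, so each wire contributes a factor \<open>2^(2^n/n + 1)\<close> to the count.\<close>
lemma min_pow2_le: assumes "1 \<le> n" "1 \<le> k"
  shows "min (2 ^ k) (2 ^ n) \<le> k * (2 ^ n div n + (1::nat))"
proof -
  have "n * (2 ^ n div n) + 2 ^ n mod n = (2::nat) ^ n" by (rule mult_div_mod_eq)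
  moreover have "(2::nat) ^ n mod n < n" using assms(1) by simp
  ultimately have "2 ^ n \<le> n * (2 ^ n div n) + n" by linarith
  then have cube: "2 ^ n \<le> n * (2 ^ n div n + 1)" by (simp only: distrib_left mult_1_right)
  show ?thesis
  proof (cases "k \<le> n")
    case True
    have "n * 2 ^ k \<le> k * 2 ^ n" using mult_pow2_le[OF assms(2) True] .
    also have "\<dots> \<le> k * (n * (2 ^ n div n + 1))" by (rule mult_le_mono2[OF cube])
    also have "\<dots> = n * (k * (2 ^ n div n + 1))" by (rule mult.left_commute)
    finally show ?thesis using assms(1) by simp
  next
    case False
    then have "n * (2 ^ n div n + 1) \<le> k * (2 ^ n div n + 1)" by (intro mult_right_mono) auto
    then show ?thesis using cube by simp
  qed
qed

definition wire_factor :: "nat \<Rightarrow> nat" where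
  "wire_factor n = 2 ^ (2 ^ n div n + 1)"

definition compositions :: "nat \<Rightarrow> (bool list \<Rightarrow> bool) list \<Rightarrow> (bool list \<Rightarrow> bool) set" where
  "compositions n Ls = range (\<lambda>h. cube_fun n (\<lambda>x. h (map (\<lambda>f. f x) Ls)))"

text \<open>A composition is determined by the values of h on the at most
  \<open>min (2^k) (2^n)\<close> patterns that occur.\<close>
lemma compositions_card:
  assumes "1 \<le> n" "Ls \<noteq> []"
  shows "finite (compositions n Ls) \<and> card (compositions n Ls) \<le> wire_factor n ^ length Ls"
proof -
  define pattern where "pattern = (\<lambda>x. map (\<lambda>f. f x) Ls)"
  define Y where "Y = pattern ` {x. length x = n}"
  have fY: "finite Y" using card_bool_cube by (simp add: Y_def)
  have "card Y \<le> 2 ^ n"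
    using card_bool_cube card_image_le[of "{x. length x = n}" pattern] by (simp add: Y_def)
  moreover have "card Y \<le> 2 ^ length Ls"
    using lists_card_le[of "UNIV::bool set" 2 "length Ls"] card_mono[of _ Y]
    by (fastforce simp: Y_def pattern_def)
  ultimately have "card Y \<le> length Ls * (2 ^ n div n + 1)"
    using min_pow2_le[OF assms(1), of "length Ls"] assms(2) by (simp add: Suc_le_eq)
  then have "(2::nat) ^ card Y \<le> 2 ^ (length Ls * (2 ^ n div n + 1))"
    by (rule power_increasing) simp
  also have "(2::nat) ^ (length Ls * (2 ^ n div n + 1)) = wire_factor n ^ length Ls"
    by (simp only: wire_factor_def mult.commute[of "length Ls"] power_mult)
  finally have exp: "2 ^ card Y \<le> wire_factor n ^ length Ls" .
  have sub: "compositions n Ls \<subseteq> (\<lambda>h. cube_fun n (\<lambda>x. h (pattern x))) ` (Y \<rightarrow>\<^sub>E (UNIV::bool set))"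
  proof
    fix g assume "g \<in> compositions n Ls"
    then obtain h where g: "g = cube_fun n (\<lambda>x. h (pattern x))"
      by (auto simp: compositions_def pattern_def)
    then have "g = cube_fun n (\<lambda>x. restrict h Y (pattern x))"
      by (auto simp: cube_fun_def Y_def)
    then show "g \<in> (\<lambda>h. cube_fun n (\<lambda>x. h (pattern x))) ` (Y \<rightarrow>\<^sub>E UNIV)" by auto
  qed
  have fP: "finite (Y \<rightarrow>\<^sub>E (UNIV::bool set))" using fY by (simp add: finite_PiE)
  have "card (compositions n Ls) \<le> card (Y \<rightarrow>\<^sub>E (UNIV::bool set))"
    using card_mono[OF finite_imageI[OF fP] sub] card_image_le[OF fP, of "\<lambda>h. cube_fun n (\<lambda>x. h (pattern x))"] by linarith
  also have "\<dots> = 2 ^ card Y" using fY by (simp add: card_PiE)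
  finally show ?thesis using exp finite_subset[OF sub] fP by auto
qed

text \<open>A buildable set has at most one new function per wire beyond the n+2 base functions.\<close>
lemma buildable_card: "buildable n A c \<Longrightarrow> finite A \<and> card A \<le> n + 2 + c"
proof (induction rule: buildable.induct)
  case base
  have "card (base_funs n) \<le> card ((\<lambda>i. cube_fun n (\<lambda>x. x ! i)) ` {..<n})
      + card {cube_fun n (\<lambda>_. True), cube_fun n (\<lambda>_. False)}"
    unfolding base_funs_def by (rule card_Un_le)
  also have "\<dots> \<le> card ((\<lambda>i. cube_fun n (\<lambda>x. x ! i)) ` {..<n}) + 2"
    by (simp add: card_insert_if)
  also have "\<dots> \<le> n + 2" using card_image_le[of "{..<n}"] by simp
  finally show ?case by (simp add: base_funs_def)
next
  case (gate A c Ls h)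
  then show ?case by (cases Ls) (auto simp: card_insert_if)
qed

lemma buildable_last_gate:
  assumes "buildable n A c"
  shows "A = base_funs n \<or> (\<exists>k\<in>{1..c}. \<exists>A' Ls. buildable n A' (c - k) \<and> set Ls \<subseteq> A' \<and>
           length Ls = k \<and> A \<in> (\<lambda>g. insert g A') ` compositions n Ls)"
  using assms
proof (cases rule: buildable.cases)
  case (gate A' c' Ls h)
  then have "length Ls \<in> {1..c}" by (cases Ls) auto
  moreover have "A \<in> (\<lambda>g. insert g A') ` compositions n Ls"
    using gate by (auto simp: compositions_def)
  ultimately show ?thesis using gate
    by (intro disjI2 bexI[of _ "length Ls"] exI[of _ A'] exI[of _ Ls]) auto
qed simp

definition extensions :: "nat \<Rightarrow> (bool list \<Rightarrow> bool) set set \<Rightarrow> nat \<Rightarrow> (bool list \<Rightarrow> bool) set set" where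
  "extensions n S k = (\<Union>A\<in>S. \<Union>Ls\<in>{Ls. set Ls \<subseteq> A \<and> length Ls = k}. (\<lambda>g. insert g A) ` compositions n Ls)"

lemma extensions_card:
  assumes "1 \<le> n" "1 \<le> k" "finite S" and small: "\<And>A. A \<in> S \<Longrightarrow> finite A \<and> card A \<le> M"
  shows "finite (extensions n S k) \<and> card (extensions n S k) \<le> card S * (M * wire_factor n) ^ k"
proof -
  define L :: "(bool list \<Rightarrow> bool) set \<Rightarrow> (bool list \<Rightarrow> bool) list set"
    where "L = (\<lambda>A. {Ls. set Ls \<subseteq> A \<and> length Ls = k})"
  define ext where "ext = (\<lambda>A Ls. (\<lambda>g. insert g A) ` compositions n Ls)"
  have one: "finite (ext A Ls) \<and> card (ext A Ls) \<le> wire_factor n ^ k" if "Ls \<in> L A" for A Ls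
  proof -
    have "Ls \<noteq> []" "length Ls = k" using that assms(2) by (auto simp: L_def)
    then show ?thesis using compositions_card[OF assms(1) \<open>Ls \<noteq> []\<close>]
        card_image_le[of "compositions n Ls" "\<lambda>g. insert g A"] by (auto simp: ext_def)
  qed
  have per_set: "finite (\<Union>Ls\<in>L A. ext A Ls) \<and> card (\<Union>Ls\<in>L A. ext A Ls) \<le> (M * wire_factor n) ^ k"
    if "A \<in> S" for A
  proof -
    have L: "finite (L A)" "card (L A) \<le> M ^ k" using lists_card_le small[OF that] by (auto simp: L_def)
    have "card (\<Union>Ls\<in>L A. ext A Ls) \<le> (\<Sum>Ls\<in>L A. card (ext A Ls))"
      by (rule card_UN_le[OF L(1)])
    also have "\<dots> \<le> (\<Sum>Ls\<in>L A. wire_factor n ^ k)" using one by (intro sum_mono) auto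
    also have "\<dots> \<le> M ^ k * wire_factor n ^ k" using L(2) by simp
    finally show ?thesis using L(1) one by (simp add: power_mult_distrib)
  qed
  have "extensions n S k = (\<Union>A\<in>S. \<Union>Ls\<in>L A. ext A Ls)"
    by (simp add: extensions_def L_def ext_def)
  moreover have "card (\<Union>A\<in>S. \<Union>Ls\<in>L A. ext A Ls) \<le> (\<Sum>A\<in>S. card (\<Union>Ls\<in>L A. ext A Ls))"
    by (rule card_UN_le[OF assms(3)])
  moreover have "\<dots> \<le> (\<Sum>A\<in>S. (M * wire_factor n) ^ k)" using per_set by (intro sum_mono) auto
  ultimately show ?thesis using per_set assms(3) by auto
qed

text \<open>Closes the recursion in the count of buildable sets.\<close>
lemma geometric_sum_le: "(\<Sum>k\<in>{1..c}. (2 * Y) ^ (c - k) * Y ^ k) + Y ^ c \<le> (2 * (Y::nat)) ^ c"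
proof (induction c)
  case 0 then show ?case by simp
next
  case (Suc c)
  have "(\<Sum>k\<in>{1..Suc c}. (2*Y)^(Suc c-k) * Y^k) + Y^Suc c
      = (2*Y) * ((\<Sum>k\<in>{1..c}. (2*Y)^(c-k) * Y^k) + Y^c)"
    by (simp add: sum_distrib_left Suc_diff_le mult.assoc algebra_simps)
  also have "\<dots> \<le> (2*Y) * (2*Y)^c" using Suc by simp
  finally show ?case by simp
qed

lemma buildable_count:
  assumes "1 \<le> n"
  shows "c \<le> s \<Longrightarrow> finite {A. buildable n A c} \<and>
     card {A. buildable n A c} \<le> (2 * ((n + 2 + s) * wire_factor n)) ^ c"
proof (induction c rule: less_induct)
  case (less c)
  define Y :: nat where "Y = (n + 2 + s) * wire_factor n"
  define B where "B = (\<lambda>c. {A. buildable n A c})"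
  have "1 \<le> wire_factor n" by (simp add: wire_factor_def)
  then have "1 \<le> Y" unfolding Y_def by (simp add: Suc_le_eq)
  then have one: "1 \<le> Y ^ c" by simp
  have IH: "finite (B (c - k)) \<and> card (B (c - k)) \<le> (2 * Y) ^ (c - k)" if "k \<in> {1..c}" for k
    using less that by (auto simp: B_def Y_def)
  have small: "finite A \<and> card A \<le> n + 2 + s" if "A \<in> B (c - k)" for A k
    using buildable_card[of n A "c - k"] that less.prems by (auto simp: B_def)
  have ext: "finite (extensions n (B (c - k)) k) \<and> card (extensions n (B (c - k)) k) \<le> (2 * Y) ^ (c - k) * Y ^ k"
    if "k \<in> {1..c}" for k
    using extensions_card[OF assms, of k "B (c - k)" "n + 2 + s"] IH[OF that] that small
    by (auto simp: Y_def intro: order_trans)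
  have cover: "B c \<subseteq> {base_funs n} \<union> (\<Union>k\<in>{1..c}. extensions n (B (c - k)) k)"
  proof
    fix A assume "A \<in> B c"
    then have "buildable n A c" by (simp add: B_def)
    from buildable_last_gate[OF this]
    show "A \<in> {base_funs n} \<union> (\<Union>k\<in>{1..c}. extensions n (B (c - k)) k)"
    proof
      assume "\<exists>k\<in>{1..c}. \<exists>A' Ls. buildable n A' (c - k) \<and> set Ls \<subseteq> A' \<and>
           length Ls = k \<and> A \<in> (\<lambda>g. insert g A') ` compositions n Ls"
      then obtain k A' Ls where "k \<in> {1..c}" "A' \<in> B (c - k)" "set Ls \<subseteq> A'" "length Ls = k"
          "A \<in> (\<lambda>g. insert g A') ` compositions n Ls"
        by (auto simp: B_def)
      then show ?thesis unfolding extensions_def by blast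
    qed simp
  qed
  have fin: "finite ({base_funs n} \<union> (\<Union>k\<in>{1..c}. extensions n (B (c - k)) k))"
    using ext by auto
  have "card (B c) \<le> card ({base_funs n} \<union> (\<Union>k\<in>{1..c}. extensions n (B (c - k)) k))"
    by (rule card_mono[OF fin cover])
  also have "\<dots> \<le> 1 + card (\<Union>k\<in>{1..c}. extensions n (B (c - k)) k)"
    using card_Un_le[of "{base_funs n}"] by simp
  also have "\<dots> \<le> 1 + (\<Sum>k\<in>{1..c}. card (extensions n (B (c - k)) k))"
    using card_UN_le[of "{1..c}"] by simp
  also have "\<dots> \<le> Y ^ c + (\<Sum>k\<in>{1..c}. (2 * Y) ^ (c - k) * Y ^ k)"
    using ext one by (intro add_mono sum_mono) auto
  also have "\<dots> \<le> (2 * Y) ^ c" using geometric_sum_le[of Y c] by linarith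
  finally show ?case using finite_subset[OF cover fin] by (simp add: B_def Y_def)
qed

lemma operators_card: "finite (operators n) \<and> card (operators n) = 2 ^ (n * 2 ^ n)"
proof -
  define U where "U = {x::bool list. length x = n}"
  define extend where "extend = (\<lambda>h::bool list \<Rightarrow> bool list. \<lambda>x. if length x = n then h x else [])"
  have U: "finite U" "card U = 2 ^ n" using card_bool_cube by (auto simp: U_def)
  have image: "operators n = extend ` (U \<rightarrow>\<^sub>E U)"
  proof
    show "operators n \<subseteq> extend ` (U \<rightarrow>\<^sub>E U)"
    proof
      fix F assume F: "F \<in> operators n"
      then have "F = extend (restrict F U)" "restrict F U \<in> U \<rightarrow>\<^sub>E U"
        by (auto simp: extend_def operators_def U_def)
      then show "F \<in> extend ` (U \<rightarrow>\<^sub>E U)" by blast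
    qed
  qed (auto simp: extend_def operators_def U_def)
  have "inj_on extend (U \<rightarrow>\<^sub>E U)"
  proof (rule inj_onI)
    fix h1 h2 assume h: "h1 \<in> U \<rightarrow>\<^sub>E U" "h2 \<in> U \<rightarrow>\<^sub>E U" "extend h1 = extend h2"
    show "h1 = h2"
    proof
      fix x
      show "h1 x = h2 x"
      proof (cases "x \<in> U")
        case True
        then show ?thesis using fun_cong[OF h(3), of x] by (simp add: extend_def U_def)
      next
        case False
        then show ?thesis using h(1,2) by (simp add: PiE_def extensional_def)
      qed
    qed
  qed
  then have "card (operators n) = (2 ^ n) ^ (2 ^ n)"
    using image U by (simp add: card_image card_PiE)
  then show ?thesis using image U by (simp add: finite_PiE power_mult)
qed

text \<open>Operators of complexity at most s are n-tuples of functions from a set buildable at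
  cost c \<le> s; counting these gives the bound below.\<close>
lemma cheap_operators_card:
  assumes "1 \<le> n"
  shows "card {F \<in> operators n. circ_complexity n F \<le> s}
     \<le> (s + 1) * (2 * ((n + 2 + s) * wire_factor n)) ^ s * (n + 2 + s) ^ n"
proof -
  define M where "M = n + 2 + s"
  define Y where "Y = M * wire_factor n"
  define L :: "(bool list \<Rightarrow> bool) set \<Rightarrow> (bool list \<Rightarrow> bool) list set"
    where "L = (\<lambda>A. {Ls. set Ls \<subseteq> A \<and> length Ls = n})"
  define T where "T = (\<Union>c\<in>{..s}. \<Union>A\<in>{A. buildable n A c}. L A)"
  have sub: "{F \<in> operators n. circ_complexity n F \<le> s} \<subseteq> tuple_op n ` T"
  proof
    fix F assume "F \<in> {F \<in> operators n. circ_complexity n F \<le> s}"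
    then have F: "F \<in> operators n" and le: "circ_complexity n F \<le> s" by auto
    obtain N P G out where C: "computes n N P G out F" and size: "circuit_size n N P = circ_complexity n F"
      using optimal_circuit[OF F] .
    obtain A fs where "buildable n A (circ_complexity n F)" "set fs \<subseteq> A" "length fs = n" "F = tuple_op n fs"
      using circuit_buildable[OF C F] size by auto
    then show "F \<in> tuple_op n ` T" using le unfolding T_def L_def by blast
  qed
  have lists: "finite (L A) \<and> card (L A) \<le> M ^ n" if "buildable n A c" "c \<le> s" for A c
  proof -
    have "finite A" "card A \<le> M" using buildable_card[OF that(1)] that(2) by (auto simp: M_def)
    then show ?thesis unfolding L_def by (rule lists_card_le)
  qed
  have per_cost: "finite (\<Union>A\<in>{A. buildable n A c}. L A) \<and>
      card (\<Union>A\<in>{A. buildable n A c}. L A) \<le> (2 * Y) ^ s * M ^ n" if c: "c \<in> {..s}" for c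
  proof -
    have B: "finite {A. buildable n A c}" "card {A. buildable n A c} \<le> (2 * Y) ^ c"
      using buildable_count[OF assms, of c s] c by (auto simp: Y_def M_def)
    have "card (\<Union>A\<in>{A. buildable n A c}. L A) \<le> (\<Sum>A\<in>{A. buildable n A c}. card (L A))"
      by (rule card_UN_le[OF B(1)])
    also have "\<dots> \<le> (\<Sum>A\<in>{A. buildable n A c}. M ^ n)" using lists c by (intro sum_mono) auto
    also have "\<dots> \<le> (2 * Y) ^ c * M ^ n" using B(2) by simp
    also have "\<dots> \<le> (2 * Y) ^ s * M ^ n"
    proof -
      have "1 \<le> wire_factor n" by (simp add: wire_factor_def)
      then have "1 \<le> 2 * Y" by (simp add: Y_def M_def)
      then have "(2 * Y) ^ c \<le> (2 * Y) ^ s" using c by (intro power_increasing) auto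
      then show ?thesis by simp
    qed
    finally show ?thesis using B(1) lists c by auto
  qed
  have finT: "finite T" unfolding T_def using per_cost by blast
  have "card {F \<in> operators n. circ_complexity n F \<le> s} \<le> card T"
    using card_mono[OF finite_imageI[OF finT] sub] card_image_le[OF finT, of "tuple_op n"] by linarith
  also have "\<dots> \<le> (\<Sum>c\<in>{..s}. card (\<Union>A\<in>{A. buildable n A c}. L A))"
    unfolding T_def by (rule card_UN_le) simp
  also have "\<dots> \<le> (\<Sum>c\<in>{..s}. (2 * Y) ^ s * M ^ n)" using per_cost by (intro sum_mono) auto
  also have "\<dots> = (s + 1) * (2 * Y) ^ s * M ^ n" by (simp add: algebra_simps)
  finally show ?thesis by (simp add: M_def Y_def)
qed

subsection \<open>Asymptotics\<close>

text \<open>With s = n^2/2 the wire factors contribute \<open>2^(n 2^n/2 + n^2/2)\<close>, only about the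
  square root of the number of all operators.\<close>
lemma exponent_bound:
  "2 * ((2 ^ n div n + 1) * (n\<^sup>2 div 2)) \<le> n * 2 ^ n + n\<^sup>2"
proof -
  have quot: "(2 ^ n div n) * n \<le> 2 ^ n" and half: "2 * (n\<^sup>2 div 2) \<le> n\<^sup>2"
    by (simp_all add: div_times_less_eq_dividend)
  have "2 * ((2 ^ n div n + 1) * (n\<^sup>2 div 2)) = (2 ^ n div n + 1) * (2 * (n\<^sup>2 div 2))" by simp
  also have "\<dots> \<le> (2 ^ n div n + 1) * n\<^sup>2" using half by (rule mult_le_mono2)
  also have "\<dots> = (2 ^ n div n) * n * n + n\<^sup>2" by (simp add: power2_eq_square algebra_simps)
  also have "\<dots> \<le> 2 ^ n * n + n\<^sup>2" using quot by simp
  finally show ?thesis by (simp add: mult.commute)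
qed

lemma cheap_count_estimate:
  assumes "1 \<le> n"
  shows "card {F \<in> operators n. circ_complexity n F \<le> n\<^sup>2 div 2}
     \<le> (n\<^sup>2 + 1) * (2 * n\<^sup>2 + 2 * n + 4) ^ (n\<^sup>2 + n) * 2 ^ ((2 ^ n div n + 1) * (n\<^sup>2 div 2))"
proof -
  define s where "s = n\<^sup>2 div 2"
  define M where "M = n + 2 + s"
  define W :: nat where "W = 2 * n\<^sup>2 + 2 * n + 4"
  define e where "e = (2 ^ n div n + 1) * s"
  have s: "s \<le> n\<^sup>2" by (simp add: s_def)
  have "(2 * (M * wire_factor n)) ^ s = (2 * M) ^ s * wire_factor n ^ s"
    by (simp only: mult.assoc[symmetric] power_mult_distrib)
  also have "wire_factor n ^ s = 2 ^ e" by (simp only: wire_factor_def e_def power_mult)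
  finally have "(2 * (M * wire_factor n)) ^ s = (2 * M) ^ s * 2 ^ e" .
  then have "(s + 1) * (2 * (M * wire_factor n)) ^ s * M ^ n = (s + 1) * ((2 * M) ^ s * M ^ n) * 2 ^ e"
    by (simp only: ac_simps)
  moreover have "(2 * M) ^ s * M ^ n \<le> W ^ (n\<^sup>2 + n)"
  proof -
    have "2 * M \<le> W" using s by (simp add: M_def W_def)
    then have "(2 * M) ^ s * M ^ n \<le> W ^ s * W ^ n" by (intro mult_mono power_mono) auto
    also have "\<dots> \<le> W ^ (n\<^sup>2 + n)"
      unfolding power_add[symmetric] using s by (intro power_increasing) (auto simp: W_def)
    finally show ?thesis .
  qed
  moreover have "s + 1 \<le> n\<^sup>2 + 1" using s by simp
  ultimately have "(s + 1) * (2 * (M * wire_factor n)) ^ s * M ^ n \<le> (n\<^sup>2 + 1) * W ^ (n\<^sup>2 + n) * 2 ^ e"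
    by (simp only:) (intro mult_le_mono1 mult_le_mono)
  with cheap_operators_card[OF assms, of s] show ?thesis
    by (simp add: M_def W_def e_def s_def)
qed

lemma cheap_fraction_bound:
  assumes "1 \<le> n"
  shows "real (card {F \<in> operators n. circ_complexity n F \<le> n\<^sup>2 div 2}) / real (card (operators n))
     \<le> (real n ^ 2 + 1) * (2 * real n ^ 2 + 2 * real n + 4) ^ (n\<^sup>2 + n) * 2 powr ((real n ^ 2 - real n * 2 ^ n) / 2)"
proof -
  define e where "e = (2 ^ n div n + 1) * (n\<^sup>2 div 2)"
  define poly where "poly = (real n ^ 2 + 1) * (2 * real n ^ 2 + 2 * real n + 4) ^ (n\<^sup>2 + n)"
  define cheap where "cheap = {F \<in> operators n. circ_complexity n F \<le> n\<^sup>2 div 2}"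
  have "real (card cheap) \<le> real ((n\<^sup>2 + 1) * (2 * n\<^sup>2 + 2 * n + 4) ^ (n\<^sup>2 + n) * 2 ^ e)"
    using cheap_count_estimate[OF assms] unfolding cheap_def e_def by (simp only: of_nat_le_iff)
  also have "\<dots> = poly * 2 ^ e" by (simp add: poly_def algebra_simps)
  finally have count: "real (card cheap) \<le> poly * 2 ^ e" .
  have "real (2 * e) \<le> real (n * 2 ^ n + n\<^sup>2)"
    using exponent_bound[of n] unfolding e_def by (simp only: of_nat_le_iff)
  then have exponent: "real e - real (n * 2 ^ n) \<le> (real n ^ 2 - real n * 2 ^ n) / 2" by simp
  have "(2::real) powr real e = 2 ^ e" "(2::real) powr real (n * 2 ^ n) = 2 ^ (n * 2 ^ n)"
    by (rule powr_realpow, simp)+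
  then have "(2::real) ^ e / 2 ^ (n * 2 ^ n) = 2 powr (real e - real (n * 2 ^ n))"
    by (simp only: powr_diff)
  also have "\<dots> \<le> 2 powr ((real n ^ 2 - real n * 2 ^ n) / 2)"
    using exponent by (rule powr_mono) simp
  finally have ratio: "(2::real) ^ e / 2 ^ (n * 2 ^ n) \<le> 2 powr ((real n ^ 2 - real n * 2 ^ n) / 2)" .
  have "real (card cheap) / real (card (operators n)) = real (card cheap) / 2 ^ (n * 2 ^ n)"
    using operators_card[of n] by simp
  also have "\<dots> \<le> poly * 2 ^ e / 2 ^ (n * 2 ^ n)" using count by (simp add: divide_right_mono)
  also have "\<dots> = poly * (2 ^ e / 2 ^ (n * 2 ^ n))" by simp
  also have "\<dots> \<le> poly * 2 powr ((real n ^ 2 - real n * 2 ^ n) / 2)"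
    using ratio by (rule mult_left_mono) (simp add: poly_def)
  finally show ?thesis by (simp add: cheap_def poly_def)
qed

text \<open>The bound of the previous lemma tends to 0: \<open>2^(-n 2^n/2)\<close> beats \<open>2^(O(n^2 log n))\<close>.\<close>
lemma cheap_bound_vanishes:
  "(\<lambda>n::nat. (real n ^ 2 + 1) * (2 * real n ^ 2 + 2 * real n + 4) ^ (n\<^sup>2 + n)
      * 2 powr ((real n ^ 2 - real n * 2 ^ n) / 2)) \<longlonglongrightarrow> 0"
  by real_asymp

lemma cheap_fraction_vanishes:
  "(\<lambda>n. real (card {F \<in> operators n. \<not> 1/2 * real n ^ 2 \<le> real (circ_complexity n F)})
      / real (card (operators n))) \<longlonglongrightarrow> 0"
proof (rule tendsto_sandwich[OF _ _ tendsto_const cheap_bound_vanishes])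
  show "\<forall>\<^sub>F n in sequentially. 0 \<le> real (card {F \<in> operators n. \<not> 1/2 * real n ^ 2 \<le> real (circ_complexity n F)})
      / real (card (operators n))" by simp
  show "\<forall>\<^sub>F n in sequentially. real (card {F \<in> operators n. \<not> 1/2 * real n ^ 2 \<le> real (circ_complexity n F)})
      / real (card (operators n)) \<le> (real n ^ 2 + 1) * (2 * real n ^ 2 + 2 * real n + 4) ^ (n\<^sup>2 + n)
      * 2 powr ((real n ^ 2 - real n * 2 ^ n) / 2)"
    unfolding eventually_sequentially
  proof (intro exI allI impI)
    fix n :: nat assume n: "1 \<le> n"
    have "circ_complexity n F \<le> n\<^sup>2 div 2" if "\<not> 1/2 * real n ^ 2 \<le> real (circ_complexity n F)" for F
    proof -
      have "real (2 * circ_complexity n F) < real (n\<^sup>2)" using that by simp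
      then have "2 * circ_complexity n F \<le> n\<^sup>2" by (simp only: of_nat_less_iff)
      then have "(2 * circ_complexity n F) div 2 \<le> n\<^sup>2 div 2" by (rule div_le_mono)
      then show ?thesis by simp
    qed
    then have "{F \<in> operators n. \<not> 1/2 * real n ^ 2 \<le> real (circ_complexity n F)}
        \<subseteq> {F \<in> operators n. circ_complexity n F \<le> n\<^sup>2 div 2}"
      by blast
    then have "card {F \<in> operators n. \<not> 1/2 * real n ^ 2 \<le> real (circ_complexity n F)}
        \<le> card {F \<in> operators n. circ_complexity n F \<le> n\<^sup>2 div 2}"
      using operators_card[of n] by (intro card_mono) auto
    then have "real (card {F \<in> operators n. \<not> 1/2 * real n ^ 2 \<le> real (circ_complexity n F)}) / real (card (operators n))
        \<le> real (card {F \<in> operators n. circ_complexity n F \<le> n\<^sup>2 div 2}) / real (card (operators n))"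
      by (intro divide_right_mono) auto
    also have "\<dots> \<le> (real n ^ 2 + 1) * (2 * real n ^ 2 + 2 * real n + 4) ^ (n\<^sup>2 + n)
      * 2 powr ((real n ^ 2 - real n * 2 ^ n) / 2)"
      by (rule cheap_fraction_bound[OF n])
    finally show "real (card {F \<in> operators n. \<not> 1/2 * real n ^ 2 \<le> real (circ_complexity n F)})
      / real (card (operators n)) \<le> (real n ^ 2 + 1) * (2 * real n ^ 2 + 2 * real n + 4) ^ (n\<^sup>2 + n)
      * 2 powr ((real n ^ 2 - real n * 2 ^ n) / 2)" .
  qed
qed

lemma fraction_complement:
  assumes "finite S" "S \<noteq> {}"
  shows "real (card {x \<in> S. P x}) / real (card S) = 1 - real (card {x \<in> S. \<not> P x}) / real (card S)"
proof -
  have "S = {x \<in> S. P x} \<union> {x \<in> S. \<not> P x}" by auto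
  then have "card S = card {x \<in> S. P x} + card {x \<in> S. \<not> P x}"
    using assms(1) by (simp add: card_Un_disjoint[symmetric] disjoint_iff)
  then have sum: "real (card S) - real (card {x \<in> S. \<not> P x}) = real (card {x \<in> S. P x})" by simp
  have "card S \<noteq> 0" using assms by simp
  then have "1 - real (card {x \<in> S. \<not> P x}) / real (card S)
      = (real (card S) - real (card {x \<in> S. \<not> P x})) / real (card S)"
    by (simp add: diff_divide_distrib)
  then show ?thesis by (simp only: sum)
qed

theorem theorem1:
  shows "\<exists>c::real. c > 0 \<and>
    (\<lambda>n. real (card {F \<in> operators n. real (circ_complexity n F) \<ge> c * real n ^ 2})
          / real (card (operators n))) \<longlonglongrightarrow> 1"
proof (intro exI conjI)
  show "(1/2::real) > 0" by simp
  have complement: "real (card {F \<in> operators n. 1/2 * real n ^ 2 \<le> real (circ_complexity n F)})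
      / real (card (operators n))
    = 1 - real (card {F \<in> operators n. \<not> 1/2 * real n ^ 2 \<le> real (circ_complexity n F)})
      / real (card (operators n))" for n
    using operators_card[of n] by (intro fraction_complement) auto
  have "(\<lambda>n. 1 - real (card {F \<in> operators n. \<not> 1/2 * real n ^ 2 \<le> real (circ_complexity n F)})
      / real (card (operators n))) \<longlonglongrightarrow> 1 - 0"
    by (intro tendsto_diff tendsto_const cheap_fraction_vanishes)
  then show "(\<lambda>n. real (card {F \<in> operators n. real (circ_complexity n F) \<ge> 1/2 * real n ^ 2})
      / real (card (operators n))) \<longlonglongrightarrow> 1"
    by (simp only: complement diff_zero)
qed

end
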